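(* Let $A$ be a finite dimensional algebra over a field and $\underline{M}=(M,M')$ a bonded pair of $A$-$A$-bimodules. Then the space $\mathbb{T}_A(\underline{M})=\bigoplus_{i\ge1}M^{\otimes_Ai}\oplus A\oplus\bigoplus_{i\le-1}M'^{\otimes_A -i}$ (with $A$ in degree $0$, $M^{\otimes_A i}$ in degree $i$, $M'^{\otimes_A -i}$ in degree $i<0$) is a $\mathbb{Z}$-graded algebra, whose product of an element of degree $i_1$ with an element of degree $i_2$ is the natural bimodule homomorphism into the degree $i_1+i_2$ component obtained by concatenating tensors and applying the bonding maps $M\otimes_AM'\to A$, $M'\otimes_AM\to A$ to adjacent factors as many times as possible (with $M^{\otimes_A0}=M'^{\otimes_A0}=A$).
   Context: A pair $\underline M=(M,M')$ of $A$-$A$-bimodules is bonded if there are bimodule homomorphisms $M\otimes_AM'\to A$ and $M'\otimes_AM\to A$ such that the two resulting maps $M\otimes_AM'\otimes_AM\to M$ are equal and the two resulting maps $M'\otimes_AM\otimes_AM'\to M'$ are equal. *)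

theory Defs
  imports Main
begin

definition k_algebra :: "('k::field \<Rightarrow> 'a::ring_1) \<Rightarrow> bool" where
  "k_algebra \<phi> \<longleftrightarrow>
     (\<forall>c d. \<phi> (c + d) = \<phi> c + \<phi> d) \<and> (\<forall>c d. \<phi> (c * d) = \<phi> c * \<phi> d) \<and> \<phi> 1 = 1 \<and>
     (\<forall>c a. \<phi> c * a = a * \<phi> c)"

definition fin_dim_algebra :: "('k::field \<Rightarrow> 'a::ring_1) \<Rightarrow> bool" where
  "fin_dim_algebra \<phi> \<longleftrightarrow> k_algebra \<phi> \<and>
     (\<exists>B. finite B \<and> (\<forall>a. \<exists>c. a = (\<Sum>b\<in>B. \<phi> (c b) * b)))"

definition bimodule :: "('k::field \<Rightarrow> 'a::ring_1) \<Rightarrow> ('a \<Rightarrow> 'm::ab_group_add \<Rightarrow> 'm)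
    \<Rightarrow> ('m \<Rightarrow> 'a \<Rightarrow> 'm) \<Rightarrow> bool" where
  "bimodule \<phi> l r \<longleftrightarrow>
     (\<forall>a x y. l a (x + y) = l a x + l a y) \<and> (\<forall>a b x. l (a + b) x = l a x + l b x) \<and>
     (\<forall>a b x. l (a * b) x = l a (l b x)) \<and> (\<forall>x. l 1 x = x) \<and>
     (\<forall>a x y. r (x + y) a = r x a + r y a) \<and> (\<forall>a b x. r x (a + b) = r x a + r x b) \<and>
     (\<forall>a b x. r x (a * b) = r (r x a) b) \<and> (\<forall>x. r x 1 = x) \<and>
     (\<forall>a b x. l a (r x b) = r (l a x) b) \<and>
     (\<forall>c x. l (\<phi> c) x = r x (\<phi> c))"

text \<open>A bimodule homomorphism M \<otimes>_A N \<rightarrow> A, given (via the universal property of the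
  tensor product over A) by an A-balanced biadditive map beta with beta(a x, y) = a beta(x,y)
  and beta(x, y a) = beta(x,y) a.\<close>
definition bimod_pairing :: "('a::ring_1 \<Rightarrow> 'm::ab_group_add \<Rightarrow> 'm) \<Rightarrow> ('m \<Rightarrow> 'a \<Rightarrow> 'm)
    \<Rightarrow> ('a \<Rightarrow> 'n::ab_group_add \<Rightarrow> 'n) \<Rightarrow> ('n \<Rightarrow> 'a \<Rightarrow> 'n) \<Rightarrow> ('m \<Rightarrow> 'n \<Rightarrow> 'a) \<Rightarrow> bool" where
  "bimod_pairing lM rM lN rN \<beta> \<longleftrightarrow>
     (\<forall>x x' y. \<beta> (x + x') y = \<beta> x y + \<beta> x' y) \<and>
     (\<forall>x y y'. \<beta> x (y + y') = \<beta> x y + \<beta> x y') \<and>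
     (\<forall>x a y. \<beta> (rM x a) y = \<beta> x (lN a y)) \<and>
     (\<forall>a x y. \<beta> (lM a x) y = a * \<beta> x y) \<and>
     (\<forall>x y a. \<beta> x (rN y a) = \<beta> x y * a)"

definition bonded :: "('a::ring_1 \<Rightarrow> 'm::ab_group_add \<Rightarrow> 'm) \<Rightarrow> ('m \<Rightarrow> 'a \<Rightarrow> 'm)
    \<Rightarrow> ('a \<Rightarrow> 'n::ab_group_add \<Rightarrow> 'n) \<Rightarrow> ('n \<Rightarrow> 'a \<Rightarrow> 'n)
    \<Rightarrow> ('m \<Rightarrow> 'n \<Rightarrow> 'a) \<Rightarrow> ('n \<Rightarrow> 'm \<Rightarrow> 'a) \<Rightarrow> bool" where
  "bonded lM rM lN rN \<beta> \<beta>' \<longleftrightarrow>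
     bimod_pairing lM rM lN rN \<beta> \<and> bimod_pairing lN rN lM rM \<beta>' \<and>
     (\<forall>x y x'. lM (\<beta> x y) x' = rM x (\<beta>' y x')) \<and>
     (\<forall>y x y'. lN (\<beta>' y x) y' = rN y (\<beta> x y'))"

text \<open>Generators: G0 a in degree 0 (an element of A), GP [x1,...,xi] = x1 \<otimes> ... \<otimes> xi
  in degree i \<ge> 1, GN [y1,...,yj] = y1 \<otimes> ... \<otimes> yj in degree -j \<le> -1.\<close>
datatype ('a, 'm, 'n) gen = G0 'a | GP "'m list" | GN "'n list"

fun valid_gen :: "('a, 'm, 'n) gen \<Rightarrow> bool" where
  "valid_gen (G0 a) = True"
| "valid_gen (GP xs) = (xs \<noteq> [])"
| "valid_gen (GN ys) = (ys \<noteq> [])"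

fun gdeg :: "('a, 'm, 'n) gen \<Rightarrow> int" where
  "gdeg (G0 a) = 0"
| "gdeg (GP xs) = int (length xs)"
| "gdeg (GN ys) = - int (length ys)"

text \<open>cwP rM lN beta rxs a ys represents (rev rxs) \<otimes> a \<otimes> ys with all possible
  contractions M \<otimes> M' \<rightarrow> A carried out.\<close>
fun cwP :: "('m \<Rightarrow> 'a \<Rightarrow> 'm) \<Rightarrow> ('a \<Rightarrow> 'n \<Rightarrow> 'n) \<Rightarrow> ('m \<Rightarrow> 'n \<Rightarrow> 'a)
    \<Rightarrow> 'm list \<Rightarrow> 'a \<Rightarrow> 'n list \<Rightarrow> ('a, 'm, 'n) gen" where
  "cwP rM lN \<beta> [] a [] = G0 a"
| "cwP rM lN \<beta> [] a (y # ys) = GN (lN a y # ys)"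
| "cwP rM lN \<beta> (x # rxs) a [] = GP (rev rxs @ [rM x a])"
| "cwP rM lN \<beta> (x # rxs) a (y # ys) = cwP rM lN \<beta> rxs (\<beta> (rM x a) y) ys"

fun cwN :: "('n \<Rightarrow> 'a \<Rightarrow> 'n) \<Rightarrow> ('a \<Rightarrow> 'm \<Rightarrow> 'm) \<Rightarrow> ('n \<Rightarrow> 'm \<Rightarrow> 'a)
    \<Rightarrow> 'n list \<Rightarrow> 'a \<Rightarrow> 'm list \<Rightarrow> ('a, 'm, 'n) gen" where
  "cwN rN lM \<beta>' [] a [] = G0 a"
| "cwN rN lM \<beta>' [] a (x # xs) = GP (lM a x # xs)"
| "cwN rN lM \<beta>' (y # rys) a [] = GN (rev rys @ [rN y a])"
| "cwN rN lM \<beta>' (y # rys) a (x # xs) = cwN rN lM \<beta>' rys (\<beta>' (rN y a) x) xs"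

fun gmult :: "('a::ring_1 \<Rightarrow> 'm \<Rightarrow> 'm) \<Rightarrow> ('m \<Rightarrow> 'a \<Rightarrow> 'm)
    \<Rightarrow> ('a \<Rightarrow> 'n \<Rightarrow> 'n) \<Rightarrow> ('n \<Rightarrow> 'a \<Rightarrow> 'n)
    \<Rightarrow> ('m \<Rightarrow> 'n \<Rightarrow> 'a) \<Rightarrow> ('n \<Rightarrow> 'm \<Rightarrow> 'a)
    \<Rightarrow> ('a, 'm, 'n) gen \<Rightarrow> ('a, 'm, 'n) gen \<Rightarrow> ('a, 'm, 'n) gen" where
  "gmult lM rM lN rN \<beta> \<beta>' (G0 a) (G0 b) = G0 (a * b)"
| "gmult lM rM lN rN \<beta> \<beta>' (G0 a) (GP xs) = cwN rN lM \<beta>' [] a xs"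
| "gmult lM rM lN rN \<beta> \<beta>' (G0 a) (GN ys) = cwP rM lN \<beta> [] a ys"
| "gmult lM rM lN rN \<beta> \<beta>' (GP xs) (G0 a) = cwP rM lN \<beta> (rev xs) a []"
| "gmult lM rM lN rN \<beta> \<beta>' (GN ys) (G0 a) = cwN rN lM \<beta>' (rev ys) a []"
| "gmult lM rM lN rN \<beta> \<beta>' (GP xs) (GP xs') = GP (xs @ xs')"
| "gmult lM rM lN rN \<beta> \<beta>' (GN ys) (GN ys') = GN (ys @ ys')"
| "gmult lM rM lN rN \<beta> \<beta>' (GP xs) (GN ys) = cwP rM lN \<beta> (rev xs) 1 ys"
| "gmult lM rM lN rN \<beta> \<beta>' (GN ys) (GP xs) = cwN rN lM \<beta>' (rev ys) 1 xs"

text \<open>Elements of the free abelian group on the (valid) generators.\<close>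
definition free_el :: "(('a, 'm, 'n) gen \<Rightarrow> int) \<Rightarrow> bool" where
  "free_el f \<longleftrightarrow> finite {u. f u \<noteq> 0} \<and> (\<forall>u. f u \<noteq> 0 \<longrightarrow> valid_gen u)"

definition single :: "'b \<Rightarrow> 'b \<Rightarrow> int" where
  "single u = (\<lambda>w. if w = u then 1 else 0)"

definition fadd :: "('b \<Rightarrow> int) \<Rightarrow> ('b \<Rightarrow> int) \<Rightarrow> 'b \<Rightarrow> int" where
  "fadd f g = (\<lambda>w. f w + g w)"

definition fdiff :: "('b \<Rightarrow> int) \<Rightarrow> ('b \<Rightarrow> int) \<Rightarrow> 'b \<Rightarrow> int" where
  "fdiff f g = (\<lambda>w. f w - g w)"

definition fmult :: "('b \<Rightarrow> 'b \<Rightarrow> 'b) \<Rightarrow> ('b \<Rightarrow> int) \<Rightarrow> ('b \<Rightarrow> int) \<Rightarrow> 'b \<Rightarrow> int" where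
  "fmult gm f g = (\<lambda>w. \<Sum>(u, v) \<in> {(u, v). f u \<noteq> 0 \<and> g v \<noteq> 0 \<and> gm u v = w}. f u * g v)"

inductive_set zspan :: "('b \<Rightarrow> int) set \<Rightarrow> ('b \<Rightarrow> int) set" for R where
  zspan_zero: "(\<lambda>_. 0) \<in> zspan R"
| zspan_gen: "r \<in> R \<Longrightarrow> r \<in> zspan R"
| zspan_diff: "f \<in> zspan R \<Longrightarrow> g \<in> zspan R \<Longrightarrow> fdiff f g \<in> zspan R"

text \<open>The quotient of the free abelian group
  on the generators of degree i by these relations is M^{\<otimes>_A i}, A, resp. M'^{\<otimes>_A -i}.\<close>
definition tensor_rels :: "('a::ring_1 \<Rightarrow> 'm::ab_group_add \<Rightarrow> 'm) \<Rightarrow> ('m \<Rightarrow> 'a \<Rightarrow> 'm)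
    \<Rightarrow> ('a \<Rightarrow> 'n::ab_group_add \<Rightarrow> 'n) \<Rightarrow> ('n \<Rightarrow> 'a \<Rightarrow> 'n) \<Rightarrow> (('a, 'm, 'n) gen \<Rightarrow> int) set" where
  "tensor_rels lM rM lN rN =
     {fdiff (fdiff (single (G0 (a + b))) (single (G0 a))) (single (G0 b)) | a b. True}
   \<union> {fdiff (fdiff (single (GP (xs @ (x + x') # zs))) (single (GP (xs @ x # zs))))
        (single (GP (xs @ x' # zs))) | xs x x' zs. True}
   \<union> {fdiff (single (GP (xs @ rM x a # x' # zs))) (single (GP (xs @ x # lM a x' # zs)))
        | xs x a x' zs. True}
   \<union> {fdiff (fdiff (single (GN (ys @ (y + y') # zs))) (single (GN (ys @ y # zs))))
        (single (GN (ys @ y' # zs))) | ys y y' zs. True}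
   \<union> {fdiff (single (GN (ys @ rN y a # y' # zs))) (single (GN (ys @ y # lN a y' # zs)))
        | ys y a y' zs. True}"

end

theory Submission
  imports Defs "HOL-Library.Function_Algebras"
begin

text \<open>
  The product is defined on generators and extended biadditively, so everything reduces to the
  product of generators modulo the defining relations. It sends relations to relations on either
  side, because the contractions are biadditive and A-balanced. It is associative on the nose,
  except for the triples in which contractions can be performed at two junctions in different
  orders (patterns x \<otimes> a \<otimes> x' and x \<otimes> y \<otimes> x', and their duals); there the two results are
  identified by A-balancedness and by the bonding condition \<beta>(x, y) x' = x \<beta>'(y, x').
  Since M and M' enter symmetrically, every statement about M' is obtained from the one about M
  by exchanging the two bimodules.
\<close>

section \<open>Finitely supported integer-valued functions\<close>

definition smul :: "int \<Rightarrow> ('b \<Rightarrow> int) \<Rightarrow> 'b \<Rightarrow> int" where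
  "smul k f = (\<lambda>w. k * f w)"

definition finsupp :: "('b \<Rightarrow> int) \<Rightarrow> bool" where
  "finsupp f \<longleftrightarrow> finite {u. f u \<noteq> 0}"

definition finsupp_on :: "('b \<Rightarrow> bool) \<Rightarrow> ('b \<Rightarrow> int) \<Rightarrow> bool" where
  "finsupp_on P f \<longleftrightarrow> finsupp f \<and> (\<forall>u. f u \<noteq> 0 \<longrightarrow> P u)"

lemma fdiff_eq_minus: "fdiff f g = f - g"
  by (auto simp: fdiff_def fun_diff_def)

lemma fadd_eq_plus: "fadd f g = f + g"
  by (auto simp: fadd_def)

lemma sum_fun_apply: "sum F A w = (\<Sum>x\<in>A. F x w)"
  by (induction A rule: infinite_finite_induct) auto

lemma zspan_0: "0 \<in> zspan R"
  using zspan_zero[of R] by (simp add: zero_fun_def)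

lemma zspan_minus: "f \<in> zspan R \<Longrightarrow> g \<in> zspan R \<Longrightarrow> f - g \<in> zspan R"
  using zspan_diff[of f R g] by (simp add: fdiff_eq_minus)

lemma zspan_uminus: "f \<in> zspan R \<Longrightarrow> - f \<in> zspan R"
  using zspan_minus[OF zspan_0, of f R] by simp

lemma zspan_add: "f \<in> zspan R \<Longrightarrow> g \<in> zspan R \<Longrightarrow> f + g \<in> zspan R"
  using zspan_minus[OF _ zspan_uminus, of f R g] by simp

lemma zspan_sum: "(\<And>x. x \<in> A \<Longrightarrow> F x \<in> zspan R) \<Longrightarrow> sum F A \<in> zspan R"
  by (induction A rule: infinite_finite_induct) (auto intro: zspan_0 zspan_add)

lemma zspan_smul:
  assumes "f \<in> zspan R"
  shows "smul k f \<in> zspan R"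
proof (induction k rule: int_induct[where k = 0])
  case base
  show ?case using zspan_0 by (simp add: smul_def zero_fun_def)
next
  case (step1 i)
  have "smul (i + 1) f = smul i f + f" by (auto simp: smul_def algebra_simps)
  then show ?case using step1 assms zspan_add by metis
next
  case (step2 i)
  have "smul (i - 1) f = smul i f - f" by (auto simp: smul_def algebra_simps)
  then show ?case using step2 assms zspan_minus by metis
qed

lemma zspan_comp:
  assumes "f \<in> zspan R" "\<And>r. r \<in> R \<Longrightarrow> r \<circ> g \<in> R'"
  shows "f \<circ> g \<in> zspan R'"
  using assms(1)
proof (induction rule: zspan.induct)
  case zspan_zero
  show ?case using zspan.zspan_zero by (simp add: comp_def)
next
  case (zspan_gen r)
  then show ?case using assms(2) by (blast intro: zspan.zspan_gen)
next
  case (zspan_diff f g)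
  then show ?case using zspan.zspan_diff by (fastforce simp: fdiff_def comp_def)
qed

lemma smul_one: "smul 1 f = f"
  by (simp add: smul_def)

lemma smul_smul: "smul a (smul b f) = smul (a * b) f"
  by (simp add: smul_def mult.assoc)

lemma smul_add_left: "smul (a + b) f = smul a f + smul b f"
  by (auto simp: smul_def algebra_simps)

lemma smul_diff_right: "smul k f - smul k g = smul k (f - g)"
  by (auto simp: smul_def algebra_simps)

lemma smul_sum: "smul k (sum F A) = (\<Sum>x\<in>A. smul k (F x))"
  by (rule ext) (simp add: smul_def sum_fun_apply sum_distrib_left)

lemma finsupp_zero: "finsupp 0"
  by (simp add: finsupp_def)

lemma finsupp_single: "finsupp (single u)"
  by (simp add: finsupp_def single_def)

lemma finsupp_add: "finsupp f \<Longrightarrow> finsupp g \<Longrightarrow> finsupp (f + g)"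
  unfolding finsupp_def
  by (rule finite_subset[of _ "{u. f u \<noteq> 0} \<union> {u. g u \<noteq> 0}"]) auto

lemma finsupp_diff: "finsupp f \<Longrightarrow> finsupp g \<Longrightarrow> finsupp (f - g)"
  unfolding finsupp_def
  by (rule finite_subset[of _ "{u. f u \<noteq> 0} \<union> {u. g u \<noteq> 0}"]) auto

lemma finsupp_smul: "finsupp f \<Longrightarrow> finsupp (smul k f)"
  unfolding finsupp_def smul_def by (rule finite_subset[of _ "{u. f u \<noteq> 0}"]) auto

lemma finsupp_sum: "(\<And>x. x \<in> A \<Longrightarrow> finsupp (F x)) \<Longrightarrow> finsupp (sum F A)"
  by (induction A rule: infinite_finite_induct) (auto intro: finsupp_add finsupp_zero)

lemma finsupp_decompose: "finsupp f \<Longrightarrow> (\<Sum>u\<in>{u. f u \<noteq> 0}. smul (f u) (single u)) = f"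
  by (rule ext) (auto simp: sum_fun_apply smul_def single_def finsupp_def if_distrib cong: if_cong)

lemma zspan_finsupp: "f \<in> zspan R \<Longrightarrow> (\<And>r. r \<in> R \<Longrightarrow> finsupp r) \<Longrightarrow> finsupp f"
  by (induction rule: zspan.induct)
    (auto simp: fdiff_eq_minus zero_fun_def[symmetric] finsupp_zero finsupp_diff)

lemma fmult_eq_sum:
  assumes "finite S" "finite T" "{u. f u \<noteq> 0} \<subseteq> S" "{v. g v \<noteq> 0} \<subseteq> T"
  shows "fmult gm f g = (\<Sum>u\<in>S. \<Sum>v\<in>T. smul (f u) (smul (g v) (single (gm u v))))"
proof
  fix w
  have "fmult gm f g w = (\<Sum>(u, v)\<in>S \<times> T. if gm u v = w then f u * g v else 0)"
    unfolding fmult_def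
    by (rule sum.mono_neutral_cong_left) (use assms in \<open>auto split: if_splits\<close>)
  also have "\<dots> = (\<Sum>u\<in>S. \<Sum>v\<in>T. if gm u v = w then f u * g v else 0)"
    by (rule sum.cartesian_product[symmetric])
  finally show "fmult gm f g w = (\<Sum>u\<in>S. \<Sum>v\<in>T. smul (f u) (smul (g v) (single (gm u v)))) w"
    by (auto simp: sum_fun_apply smul_def single_def intro!: sum.cong)
qed

lemma fmult_eq_sum_supp:
  "finsupp f \<Longrightarrow> finsupp g \<Longrightarrow> fmult gm f g =
     (\<Sum>u\<in>{u. f u \<noteq> 0}. \<Sum>v\<in>{v. g v \<noteq> 0}. smul (f u) (smul (g v) (single (gm u v))))"
  by (intro fmult_eq_sum) (auto simp: finsupp_def)

lemma finsupp_fmult: "finsupp f \<Longrightarrow> finsupp g \<Longrightarrow> finsupp (fmult gm f g)"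
  by (simp add: fmult_eq_sum_supp finsupp_sum finsupp_smul finsupp_single)

lemma finsupp_on_fmult:
  assumes "\<And>u v. P u \<Longrightarrow> P v \<Longrightarrow> Q (gm u v)" "finsupp_on P f" "finsupp_on P g"
  shows "finsupp_on Q (fmult gm f g)"
proof -
  have "Q w" if "fmult gm f g w \<noteq> 0" for w
  proof -
    from that have "{(u, v). f u \<noteq> 0 \<and> g v \<noteq> 0 \<and> gm u v = w} \<noteq> {}"
      unfolding fmult_def by force
    then show "Q w" using assms by (auto simp: finsupp_on_def)
  qed
  then show ?thesis using assms(2,3) by (simp add: finsupp_on_def finsupp_fmult)
qed

lemma fmult_expand_left:
  assumes "finite S" "{u. f u \<noteq> 0} \<subseteq> S" "finsupp h"
  shows "fmult gm f h = (\<Sum>u\<in>S. smul (f u) (\<Sum>v\<in>{v. h v \<noteq> 0}. smul (h v) (single (gm u v))))"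
  using assms by (subst fmult_eq_sum[of S "{v. h v \<noteq> 0}"]) (auto simp: finsupp_def smul_sum)

lemma fmult_expand_right:
  assumes "finite T" "{v. h v \<noteq> 0} \<subseteq> T" "finsupp f"
  shows "fmult gm f h = (\<Sum>v\<in>T. smul (h v) (\<Sum>u\<in>{u. f u \<noteq> 0}. smul (f u) (single (gm u v))))"
proof -
  have "fmult gm f h = (\<Sum>u\<in>{u. f u \<noteq> 0}. \<Sum>v\<in>T. smul (f u) (smul (h v) (single (gm u v))))"
    using assms by (intro fmult_eq_sum) (auto simp: finsupp_def)
  also have "\<dots> = (\<Sum>v\<in>T. \<Sum>u\<in>{u. f u \<noteq> 0}. smul (h v) (smul (f u) (single (gm u v))))"
    by (subst sum.swap) (simp add: smul_smul mult.commute)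
  finally show ?thesis by (simp add: smul_sum)
qed

lemma fmult_add_left:
  assumes "finsupp f" "finsupp g" "finsupp h"
  shows "fmult gm (f + g) h = fmult gm f h + fmult gm g h"
proof -
  let ?S = "{u. f u \<noteq> 0} \<union> {u. g u \<noteq> 0}"
  have "finite ?S" using assms by (simp add: finsupp_def)
  note expand = fmult_expand_left[OF this _ \<open>finsupp h\<close>]
  show ?thesis
    using assms by (simp add: expand[of "f + g"] expand[of f] expand[of g] smul_add_left sum.distrib subset_iff)
qed

lemma fmult_add_right:
  assumes "finsupp f" "finsupp g" "finsupp h"
  shows "fmult gm h (f + g) = fmult gm h f + fmult gm h g"
proof -
  let ?S = "{u. f u \<noteq> 0} \<union> {u. g u \<noteq> 0}"
  have "finite ?S" using assms by (simp add: finsupp_def)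
  note expand = fmult_expand_right[OF this _ \<open>finsupp h\<close>]
  show ?thesis
    using assms by (simp add: expand[of "f + g"] expand[of f] expand[of g] smul_add_left sum.distrib subset_iff)
qed

lemma fmult_diff_left:
  assumes "finsupp f" "finsupp g" "finsupp h"
  shows "fmult gm (f - g) h = fmult gm f h - fmult gm g h"
  using fmult_add_left[of "f - g" g h gm] assms by (simp add: finsupp_diff)

lemma fmult_diff_right:
  assumes "finsupp f" "finsupp g" "finsupp h"
  shows "fmult gm h (f - g) = fmult gm h f - fmult gm h g"
  using fmult_add_right[of "f - g" g h gm] assms by (simp add: finsupp_diff)

lemma fmult_smul_left:
  assumes "finsupp f" "finsupp h"
  shows "fmult gm (smul k f) h = smul k (fmult gm f h)"
proof -
  let ?S = "{u. f u \<noteq> 0}"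
  have fin: "finite ?S" using assms by (simp add: finsupp_def)
  have sub: "{u. smul k f u \<noteq> 0} \<subseteq> ?S" by (auto simp: smul_def)
  show ?thesis
    unfolding fmult_expand_left[OF fin sub \<open>finsupp h\<close>] fmult_expand_left[OF fin _ \<open>finsupp h\<close>, of f, simplified]
    by (simp add: smul_sum smul_smul) (simp add: smul_def mult_ac)
qed

lemma fmult_smul_right:
  assumes "finsupp f" "finsupp h"
  shows "fmult gm h (smul k f) = smul k (fmult gm h f)"
proof -
  let ?S = "{u. f u \<noteq> 0}"
  have fin: "finite ?S" using assms by (simp add: finsupp_def)
  have sub: "{u. smul k f u \<noteq> 0} \<subseteq> ?S" by (auto simp: smul_def)
  show ?thesis
    unfolding fmult_expand_right[OF fin sub \<open>finsupp h\<close>] fmult_expand_right[OF fin _ \<open>finsupp h\<close>, of f, simplified]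
    by (simp add: smul_sum smul_smul) (simp add: smul_def mult_ac)
qed

lemma fmult_zero_left: "fmult gm 0 h = 0"
  by (auto simp: fmult_def)

lemma fmult_zero_right: "fmult gm h 0 = 0"
  by (auto simp: fmult_def)

lemma fmult_sum_left:
  assumes "\<And>x. x \<in> A \<Longrightarrow> finsupp (F x)" "finsupp h"
  shows "fmult gm (sum F A) h = (\<Sum>x\<in>A. fmult gm (F x) h)"
  using assms
  by (induction A rule: infinite_finite_induct)
    (auto simp: fmult_zero_left fmult_add_left finsupp_sum)

lemma fmult_sum_right:
  assumes "\<And>x. x \<in> A \<Longrightarrow> finsupp (F x)" "finsupp h"
  shows "fmult gm h (sum F A) = (\<Sum>x\<in>A. fmult gm h (F x))"
  using assms
  by (induction A rule: infinite_finite_induct)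
    (auto simp: fmult_zero_right fmult_add_right finsupp_sum)

lemma fmult_single: "fmult gm (single u) (single v) = single (gm u v)"
  by (subst fmult_eq_sum[of "{u}" "{v}"]) (auto simp: single_def smul_one)

lemma fmult_single_left:
  "finsupp h \<Longrightarrow> fmult gm (single u) h = (\<Sum>v\<in>{v. h v \<noteq> 0}. smul (h v) (single (gm u v)))"
  by (subst fmult_expand_left[of "{u}"]) (auto simp: single_def smul_one)

lemma fmult_single_right:
  "finsupp f \<Longrightarrow> fmult gm f (single v) = (\<Sum>u\<in>{u. f u \<noteq> 0}. smul (f u) (single (gm u v)))"
  by (subst fmult_expand_right[of "{v}"]) (auto simp: single_def smul_one)

lemma fmult_zspan_ideal:
  assumes R_finsupp: "\<And>r. r \<in> R \<Longrightarrow> finsupp r"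
    and R_ideal: "\<And>r v. r \<in> R \<Longrightarrow> P v \<Longrightarrow>
      fmult gm r (single v) \<in> zspan R \<and> fmult gm (single v) r \<in> zspan R"
    and f: "f \<in> zspan R" and g: "finsupp_on P g"
  shows "fmult gm f g \<in> zspan R \<and> fmult gm g f \<in> zspan R"
proof -
  have f_finsupp: "finsupp f" using zspan_finsupp[OF f R_finsupp] .
  have on_single: "fmult gm f (single v) \<in> zspan R \<and> fmult gm (single v) f \<in> zspan R"
    if "P v" for v
    using f
  proof (induction rule: zspan.induct)
    case zspan_zero
    then show ?case
      using zspan_0 by (simp add: zero_fun_def[symmetric] fmult_zero_left fmult_zero_right)
  next
    case (zspan_gen r)
    then show ?case using R_ideal[OF _ that] by simp
  next
    case (zspan_diff f1 f2)
    have "finsupp f1" "finsupp f2" using zspan_diff zspan_finsupp R_finsupp by auto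
    then show ?case using zspan_diff
      by (simp only: fdiff_eq_minus fmult_diff_left fmult_diff_right finsupp_single zspan_minus)
  qed
  have g_finsupp: "finsupp g" using g by (simp add: finsupp_on_def)
  note g_decomp = finsupp_decompose[OF g_finsupp, symmetric]
  have "fmult gm f g = (\<Sum>v\<in>{v. g v \<noteq> 0}. smul (g v) (fmult gm f (single v)))"
    by (subst g_decomp)
      (simp add: fmult_sum_right fmult_smul_right finsupp_smul finsupp_single f_finsupp)
  moreover have "fmult gm g f = (\<Sum>v\<in>{v. g v \<noteq> 0}. smul (g v) (fmult gm (single v) f))"
    by (subst g_decomp)
      (simp add: fmult_sum_left fmult_smul_left finsupp_smul finsupp_single f_finsupp)
  ultimately show ?thesis
    using on_single g by (auto simp: finsupp_on_def intro!: zspan_sum zspan_smul)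
qed

lemma sum_smul_diff_zspan:
  "(\<And>x. x \<in> A \<Longrightarrow> F x - G x \<in> zspan R) \<Longrightarrow>
    (\<Sum>x\<in>A. smul (k x) (F x)) - (\<Sum>x\<in>A. smul (k x) (G x)) \<in> zspan R"
  by (simp add: sum_subtractf[symmetric] smul_diff_right zspan_sum zspan_smul)

lemma fmult_assoc_mod_zspan:
  assumes assoc: "\<And>u v w. P u \<Longrightarrow> P v \<Longrightarrow> P w \<Longrightarrow>
      single (gm (gm u v) w) - single (gm u (gm v w)) \<in> zspan R"
    and f: "finsupp_on P f" and g: "finsupp_on P g" and h: "finsupp_on P h"
  shows "fmult gm (fmult gm f g) h - fmult gm f (fmult gm g h) \<in> zspan R"
proof -
  have fs: "finsupp f" "finsupp g" "finsupp h" using f g h by (auto simp: finsupp_on_def)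
  let ?F = "{u. f u \<noteq> 0}" and ?G = "{u. g u \<noteq> 0}" and ?H = "{u. h u \<noteq> 0}"
  have left: "fmult gm (fmult gm f g) h = (\<Sum>u\<in>?F. smul (f u) (\<Sum>v\<in>?G. smul (g v)
      (\<Sum>w\<in>?H. smul (h w) (single (gm (gm u v) w)))))"
    by (simp add: fmult_eq_sum_supp[OF fs(1,2)] fmult_sum_left fmult_smul_left fs
        finsupp_sum finsupp_smul finsupp_single fmult_single_left smul_sum)
  have "fmult gm f (fmult gm g h) = (\<Sum>v\<in>?G. \<Sum>w\<in>?H. \<Sum>u\<in>?F.
      smul (f u) (smul (g v) (smul (h w) (single (gm u (gm v w))))))"
    by (simp add: fmult_eq_sum_supp[OF fs(2,3)] fmult_sum_right fmult_smul_right fs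
        finsupp_sum finsupp_smul finsupp_single fmult_single_right smul_sum smul_smul mult_ac)
  also have "\<dots> = (\<Sum>u\<in>?F. \<Sum>v\<in>?G. \<Sum>w\<in>?H.
      smul (f u) (smul (g v) (smul (h w) (single (gm u (gm v w))))))"
    by (subst sum.swap) (subst (2) sum.swap, rule refl)
  finally have right: "fmult gm f (fmult gm g h) = (\<Sum>u\<in>?F. smul (f u) (\<Sum>v\<in>?G. smul (g v)
      (\<Sum>w\<in>?H. smul (h w) (single (gm u (gm v w))))))"
    by (simp add: smul_sum)
  show ?thesis
    unfolding left right using f g h
    by (auto simp: finsupp_on_def intro!: sum_smul_diff_zspan assoc)
qed

lemma fmult_single_left_neutral:
  assumes "\<And>v. P v \<Longrightarrow> gm e v = v" and "finsupp_on P f"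
  shows "fmult gm (single e) f = f"
proof -
  have "finsupp f" using assms(2) by (simp add: finsupp_on_def)
  then show ?thesis
    using assms by (simp add: fmult_single_left finsupp_decompose finsupp_on_def)
qed

lemma fmult_single_right_neutral:
  assumes "\<And>v. P v \<Longrightarrow> gm v e = v" and "finsupp_on P f"
  shows "fmult gm f (single e) = f"
proof -
  have "finsupp f" using assms(2) by (simp add: finsupp_on_def)
  then show ?thesis
    using assms by (simp add: fmult_single_right finsupp_decompose finsupp_on_def)
qed

lemma fmult_single_commute_mod_zspan:
  assumes "\<And>v. P v \<Longrightarrow> single (gm c v) - single (gm v c) \<in> zspan R" and "finsupp_on P f"
  shows "fmult gm (single c) f - fmult gm f (single c) \<in> zspan R"
  using assms
  by (auto simp: fmult_single_left fmult_single_right finsupp_on_def intro!: sum_smul_diff_zspan)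

lemma free_el_iff_finsupp_on: "free_el f \<longleftrightarrow> finsupp_on valid_gen f"
  by (simp add: free_el_def finsupp_on_def finsupp_def)

lemma free_el_finsupp: "free_el f \<Longrightarrow> finsupp f"
  by (simp add: free_el_iff_finsupp_on finsupp_on_def)

section \<open>Exchanging the roles of M and M'\<close>

fun gswap :: "('a, 'm, 'n) gen \<Rightarrow> ('a, 'n, 'm) gen" where
  "gswap (G0 a) = G0 a"
| "gswap (GP xs) = GN xs"
| "gswap (GN ys) = GP ys"

lemma gswap_gswap [simp]: "gswap (gswap u) = u"
  by (cases u) auto

lemma valid_gen_gswap [simp]: "valid_gen (gswap u) = valid_gen u"
  by (cases u) auto

lemma gdeg_gswap [simp]: "gdeg (gswap u) = - gdeg u"
  by (cases u) auto

lemma cwN_eq_gswap_cwP: "cwN rN lM \<beta>' ys a xs = gswap (cwP rN lM \<beta>' ys a xs)"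
  by (induction rN lM \<beta>' ys a xs rule: cwP.induct) auto

lemma gmult_gswap:
  "gmult lM rM lN rN \<beta> \<beta>' (gswap u) (gswap v) = gswap (gmult lN rN lM rM \<beta>' \<beta> u v)"
  by (cases u; cases v) (simp_all add: cwN_eq_gswap_cwP)

lemma fun_diff_comp: "(f - g) \<circ> h = (f \<circ> h) - (g \<circ> h)"
  by (simp add: fun_eq_iff)

lemma single_comp_gswap: "single u \<circ> gswap = single (gswap u)"
  by (auto simp: single_def fun_eq_iff)

lemma tensor_rels_comp_gswap:
  assumes "r \<in> tensor_rels lN rN lM rM"
  shows "r \<circ> gswap \<in> tensor_rels lM rM lN rN"
  using assms unfolding tensor_rels_def fdiff_eq_minus
  by (safe; simp only: fun_diff_comp single_comp_gswap gswap.simps) blast+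

section \<open>Bonded pairs\<close>

locale bonded_pair =
  fixes lM :: "'a::ring_1 \<Rightarrow> 'm::ab_group_add \<Rightarrow> 'm" and rM :: "'m \<Rightarrow> 'a \<Rightarrow> 'm"
    and lN :: "'a \<Rightarrow> 'n::ab_group_add \<Rightarrow> 'n" and rN :: "'n \<Rightarrow> 'a \<Rightarrow> 'n"
    and \<beta> :: "'m \<Rightarrow> 'n \<Rightarrow> 'a" and \<beta>' :: "'n \<Rightarrow> 'm \<Rightarrow> 'a"
  assumes lM_add: "lM a (x + x') = lM a x + lM a x'"
    and lM_distrib: "lM (a + b) x = lM a x + lM b x"
    and lM_mult: "lM (a * b) x = lM a (lM b x)"
    and lM_one: "lM 1 x = x"
    and rM_add: "rM (x + x') a = rM x a + rM x' a"
    and rM_distrib: "rM x (a + b) = rM x a + rM x b"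
    and rM_mult: "rM x (a * b) = rM (rM x a) b"
    and rM_one: "rM x 1 = x"
    and lM_rM: "lM a (rM x b) = rM (lM a x) b"
    and lN_add: "lN a (y + y') = lN a y + lN a y'"
    and lN_distrib: "lN (a + b) y = lN a y + lN b y"
    and lN_mult: "lN (a * b) y = lN a (lN b y)"
    and lN_one: "lN 1 y = y"
    and rN_add: "rN (y + y') a = rN y a + rN y' a"
    and rN_distrib: "rN y (a + b) = rN y a + rN y b"
    and rN_mult: "rN y (a * b) = rN (rN y a) b"
    and rN_one: "rN y 1 = y"
    and lN_rN: "lN a (rN y b) = rN (lN a y) b"
    and beta_add_left: "\<beta> (x + x') y = \<beta> x y + \<beta> x' y"
    and beta_add_right: "\<beta> x (y + y') = \<beta> x y + \<beta> x y'"
    and beta_balanced: "\<beta> (rM x a) y = \<beta> x (lN a y)"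
    and beta_lM: "\<beta> (lM a x) y = a * \<beta> x y"
    and beta_rN: "\<beta> x (rN y a) = \<beta> x y * a"
    and beta'_add_left: "\<beta>' (y + y') x = \<beta>' y x + \<beta>' y' x"
    and beta'_add_right: "\<beta>' y (x + x') = \<beta>' y x + \<beta>' y x'"
    and beta'_balanced: "\<beta>' (rN y a) x = \<beta>' y (lM a x)"
    and beta'_lN: "\<beta>' (lN a y) x = a * \<beta>' y x"
    and beta'_rM: "\<beta>' y (rM x a) = \<beta>' y x * a"
    and bond_M: "lM (\<beta> x y) x' = rM x (\<beta>' y x')"
    and bond_N: "lN (\<beta>' y x) y' = rN y (\<beta> x y')"
begin

abbreviation "cP \<equiv> cwP rM lN \<beta>"
abbreviation "cN \<equiv> cwN rN lM \<beta>'"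
abbreviation "gm \<equiv> gmult lM rM lN rN \<beta> \<beta>'"
abbreviation "Z \<equiv> zspan (tensor_rels lM rM lN rN)"

definition equiv_gen :: "('a, 'm, 'n) gen \<Rightarrow> ('a, 'm, 'n) gen \<Rightarrow> bool" where
  "equiv_gen u v \<longleftrightarrow> single u - single v \<in> Z"

definition additive_gen :: "('x::plus \<Rightarrow> ('a, 'm, 'n) gen) \<Rightarrow> bool" where
  "additive_gen F \<longleftrightarrow> (\<forall>p q. single (F (p + q)) - single (F p) - single (F q) \<in> Z)"

lemma equiv_gen_refl: "equiv_gen u u"
  by (simp add: equiv_gen_def zspan_0)

lemma equiv_gen_trans [trans]: "equiv_gen u v \<Longrightarrow> equiv_gen v w \<Longrightarrow> equiv_gen u w"
  unfolding equiv_gen_def using zspan_add by fastforce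

lemma additive_gen_comp:
  "additive_gen F \<Longrightarrow> (\<And>p q. h (p + q) = h p + h q) \<Longrightarrow> additive_gen (\<lambda>p. F (h p))"
  by (simp add: additive_gen_def)

lemma rel_G0_add: "additive_gen G0"
  unfolding additive_gen_def tensor_rels_def fdiff_eq_minus by (intro allI zspan_gen) blast

lemma rel_GP_add: "additive_gen (\<lambda>x. GP (xs @ x # zs))"
  unfolding additive_gen_def tensor_rels_def fdiff_eq_minus by (blast intro: zspan_gen)

lemma rel_GN_add: "additive_gen (\<lambda>y. GN (ys @ y # zs))"
  unfolding additive_gen_def tensor_rels_def fdiff_eq_minus by (blast intro: zspan_gen)

lemma rel_GP_balanced: "equiv_gen (GP (xs @ rM x a # x' # zs)) (GP (xs @ x # lM a x' # zs))"
  unfolding equiv_gen_def tensor_rels_def fdiff_eq_minus by (blast intro: zspan_gen)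

lemma rel_GN_balanced: "equiv_gen (GN (ys @ rN y a # y' # zs)) (GN (ys @ y # lN a y' # zs))"
  unfolding equiv_gen_def tensor_rels_def fdiff_eq_minus by (blast intro: zspan_gen)

end

text \<open>The facts of the interpretation \<open>swapped\<close> become available only after the enclosing
  context has been closed; this is why the development below is split into several blocks.\<close>

sublocale bonded_pair \<subseteq> swapped: bonded_pair lN rN lM rM \<beta>' \<beta>
  by unfold_locales
    (simp_all add: lM_add lM_distrib lM_mult lM_one rM_add rM_distrib rM_mult rM_one lM_rM
      lN_add lN_distrib lN_mult lN_one rN_add rN_distrib rN_mult rN_one lN_rN
      beta_add_left beta_add_right beta_balanced beta_lM beta_rN
      beta'_add_left beta'_add_right beta'_balanced beta'_lN beta'_rM bond_M bond_N)

context bonded_pair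
begin

lemma gswap_gm: "gswap (gm u v) = swapped.gm (gswap u) (gswap v)"
  by (rule gmult_gswap[of lN rN lM rM \<beta>' \<beta> u v, symmetric])

lemma gm_eq_gswap: "gm u v = gswap (swapped.gm (gswap u) (gswap v))"
  using arg_cong[OF gswap_gm[of u v], of gswap] by simp

lemma zspan_gswap: "f \<in> swapped.Z \<Longrightarrow> f \<circ> gswap \<in> Z"
  by (rule zspan_comp) (auto intro: tensor_rels_comp_gswap)

lemma equiv_gen_gswap: "swapped.equiv_gen u v \<Longrightarrow> equiv_gen (gswap u) (gswap v)"
  using zspan_gswap
  by (fastforce simp: equiv_gen_def swapped.equiv_gen_def fun_diff_comp single_comp_gswap)

lemma additive_gen_gswap: "swapped.additive_gen F \<Longrightarrow> additive_gen (\<lambda>p. gswap (F p))"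
  using zspan_gswap
  by (fastforce simp: additive_gen_def swapped.additive_gen_def fun_diff_comp single_comp_gswap)

lemma cwP_additive_scalar: "additive_gen (\<lambda>a. cP rxs a ys)"
proof (induction rxs arbitrary: ys)
  case Nil
  show ?case
  proof (cases ys)
    case Nil
    then show ?thesis using rel_G0_add by simp
  next
    case (Cons y ys')
    then show ?thesis
      using additive_gen_comp[OF rel_GN_add[of "[]" ys'], of "\<lambda>a. lN a y"] by (simp add: lN_distrib)
  qed
next
  case (Cons x rxs)
  show ?case
  proof (cases ys)
    case Nil
    then show ?thesis
      using additive_gen_comp[OF rel_GP_add[of "rev rxs" "[]"], of "rM x"] by (simp add: rM_distrib)
  next
    case (Cons y ys')
    then show ?thesis
      using additive_gen_comp[OF Cons.IH, of "\<lambda>a. \<beta> (rM x a) y"]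
      by (simp add: rM_distrib beta_add_left)
  qed
qed

lemma cwP_additive_left: "additive_gen (\<lambda>x. cP (rxs1 @ x # rxs2) a ys)"
proof (induction rxs1 arbitrary: a ys)
  case Nil
  show ?case
  proof (cases ys)
    case Nil
    then show ?thesis
      using additive_gen_comp[OF rel_GP_add[of "rev rxs2" "[]"], of "\<lambda>x. rM x a"]
      by (simp add: rM_add)
  next
    case (Cons y ys')
    then show ?thesis
      using additive_gen_comp[OF cwP_additive_scalar, of "\<lambda>x. \<beta> (rM x a) y"]
      by (simp add: rM_add beta_add_left)
  qed
next
  case (Cons z rxs1)
  then show ?case
    using rel_GP_add[of "rev rxs2" "rev rxs1 @ [rM z a]"] by (cases ys) simp_all
qed

lemma cwP_additive_right: "additive_gen (\<lambda>y. cP rxs a (ys1 @ y # ys2))"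
proof (induction rxs arbitrary: a ys1)
  case Nil
  show ?case
  proof (cases ys1)
    case Nil
    then show ?thesis
      using additive_gen_comp[OF rel_GN_add[of "[]" ys2], of "lN a"] by (simp add: lN_add)
  next
    case (Cons y0 ys1')
    then show ?thesis using rel_GN_add[of "lN a y0 # ys1'"] by simp
  qed
next
  case (Cons x rxs)
  show ?case
  proof (cases ys1)
    case Nil
    then show ?thesis
      using additive_gen_comp[OF cwP_additive_scalar, of "\<beta> (rM x a)"] by (simp add: beta_add_right)
  next
    case (Cons y0 ys1')
    then show ?thesis using Cons.IH by simp
  qed
qed

lemma cwP_rM_Cons: "cP (rM x a # rxs) d ys = cP (x # rxs) (a * d) ys"
  by (cases ys) (simp_all add: rM_mult)

lemma cwP_lN_Cons: "cP rxs (d * a) (y # ys) = cP rxs d (lN a y # ys)"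
  by (cases rxs) (simp_all add: lN_mult rM_mult beta_balanced)

lemma cwP_balanced_left:
  "equiv_gen (cP (rxs1 @ x' # rM x a # rxs2) c ys) (cP (rxs1 @ lM a x' # x # rxs2) c ys)"
proof (induction rxs1 arbitrary: c ys)
  case Nil
  show ?case
  proof (cases ys)
    case Nil
    then show ?thesis
      using rel_GP_balanced[of "rev rxs2" x a "rM x' c" "[]"] by (simp add: lM_rM)
  next
    case (Cons y ys')
    then show ?thesis by (simp add: cwP_rM_Cons beta_balanced beta_lM equiv_gen_refl)
  qed
next
  case (Cons z rxs1)
  then show ?case
    using rel_GP_balanced[of "rev rxs2" x a x' "rev rxs1 @ [rM z c]"] by (cases ys) simp_all
qed

lemma cwP_balanced_right:
  "equiv_gen (cP rxs c (ys1 @ rN y a # y' # ys2)) (cP rxs c (ys1 @ y # lN a y' # ys2))"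
proof (induction rxs arbitrary: c ys1)
  case Nil
  show ?case
  proof (cases ys1)
    case Nil
    then show ?thesis
      using rel_GN_balanced[of "[]" "lN c y" a y' ys2] by (simp add: lN_rN)
  next
    case (Cons y0 ys1')
    then show ?thesis using rel_GN_balanced[of "lN c y0 # ys1'"] by simp
  qed
next
  case (Cons x rxs)
  then show ?case
    by (cases ys1) (simp_all add: beta_rN cwP_lN_Cons equiv_gen_refl)
qed

lemma gm_cwP_GN: "ys' \<noteq> [] \<Longrightarrow> gm (cP rxs a ys) (GN ys') = cP rxs a (ys @ ys')"
proof (induction rxs arbitrary: a ys)
  case Nil
  then show ?case by (cases ys'; cases ys) simp_all
next
  case (Cons x rxs)
  then show ?case by (cases ys) (simp_all add: cwP_rM_Cons)
qed

lemma gm_GP_cwP: "xs \<noteq> [] \<Longrightarrow> gm (GP xs) (cP rxs a ys) = cP (rxs @ rev xs) a ys"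
proof (induction rxs arbitrary: a ys)
  case Nil
  then show ?case by (cases ys) (simp_all add: cwP_lN_Cons[of _ 1, simplified, symmetric])
next
  case (Cons x rxs)
  then show ?case by (cases ys) simp_all
qed

lemma gm_G0_cwP_Nil: "gm (G0 b) (cP [] a ys) = cP [] (b * a) ys"
  by (cases ys) (simp_all add: lN_mult)

lemma gm_G0_cwP_snoc: "gm (G0 b) (cP (rxs @ [x]) a ys) = cP (rxs @ [lM b x]) a ys"
proof (induction rxs arbitrary: a ys)
  case Nil
  then show ?case by (cases ys) (simp_all add: lM_rM gm_G0_cwP_Nil beta_balanced beta_lM)
next
  case (Cons z rxs)
  then show ?case by (cases ys) simp_all
qed

lemma gm_cwP_Nil_G0: "gm (cP rxs a []) (G0 b) = cP rxs (a * b) []"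
  by (cases rxs) (simp_all add: rM_mult)

lemma gm_cwP_snoc_G0: "gm (cP rxs a (ys @ [y])) (G0 b) = cP rxs a (ys @ [rN y b])"
proof (induction rxs arbitrary: a ys)
  case Nil
  then show ?case by (cases ys) (simp_all add: lN_rN)
next
  case (Cons x rxs)
  then show ?case by (cases ys) (simp_all add: gm_cwP_Nil_G0 beta_rN)
qed

lemma valid_gdeg_cwP:
  "valid_gen (cP rxs a ys) \<and> gdeg (cP rxs a ys) = int (length rxs) - int (length ys)"
proof (induction rxs arbitrary: a ys)
  case Nil
  then show ?case by (cases ys) simp_all
next
  case (Cons x rxs)
  then show ?case by (cases ys) (simp_all del: cwP.simps add: cwP.simps(3,4))
qed

lemma cwP_rev_Nil: "xs \<noteq> [] \<Longrightarrow> cP (rev xs) a [] = GP (butlast xs @ [rM (last xs) a])"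
  by (induction xs rule: rev_induct) auto

end

context bonded_pair
begin

lemma valid_gdeg_gm:
  "valid_gen u \<Longrightarrow> valid_gen v \<Longrightarrow> valid_gen (gm u v) \<and> gdeg (gm u v) = gdeg u + gdeg v"
  by (cases u; cases v) (auto simp: cwN_eq_gswap_cwP valid_gdeg_cwP swapped.valid_gdeg_cwP)

lemma gm_G0_one_left: "valid_gen v \<Longrightarrow> gm (G0 1) v = v"
  by (cases v) (auto simp: neq_Nil_conv lM_one lN_one)

lemma gm_G0_one_right: "valid_gen v \<Longrightarrow> gm v (G0 1) = v"
  by (cases v) (auto simp: cwN_eq_gswap_cwP cwP_rev_Nil swapped.cwP_rev_Nil rM_one rN_one)

lemma additive_gm_G0_left: "additive_gen (\<lambda>a. gm (G0 a) v)"
proof (cases v)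
  case (G0 b)
  then show ?thesis
    using additive_gen_comp[OF rel_G0_add, of "\<lambda>a. a * b"] by (simp add: distrib_right)
qed (simp_all add: cwN_eq_gswap_cwP cwP_additive_scalar additive_gen_gswap swapped.cwP_additive_scalar)

lemma additive_gm_G0_right: "additive_gen (\<lambda>a. gm v (G0 a))"
proof (cases v)
  case (G0 b)
  then show ?thesis
    using additive_gen_comp[OF rel_G0_add, of "\<lambda>a. b * a"] by (simp add: distrib_left)
qed (simp_all add: cwN_eq_gswap_cwP cwP_additive_scalar additive_gen_gswap swapped.cwP_additive_scalar)

lemma additive_gm_GP_left: "additive_gen (\<lambda>x. gm (GP (xs @ x # zs)) v)"
proof (cases v)
  case (G0 d)
  then show ?thesis using cwP_additive_left[of "rev zs" "rev xs" d "[]"] by simp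
next
  case (GP ws)
  then show ?thesis using rel_GP_add[of xs "zs @ ws"] by simp
next
  case (GN ys)
  then show ?thesis using cwP_additive_left[of "rev zs" "rev xs" 1 ys] by simp
qed

lemma additive_gm_GP_right: "additive_gen (\<lambda>x. gm v (GP (xs @ x # zs)))"
proof (cases v)
  case (G0 d)
  then show ?thesis
    using additive_gen_gswap[OF swapped.cwP_additive_right[of "[]" d xs zs]]
    by (simp add: cwN_eq_gswap_cwP)
next
  case (GP ws)
  then show ?thesis using rel_GP_add[of "ws @ xs" zs] by simp
next
  case (GN ys)
  then show ?thesis
    using additive_gen_gswap[OF swapped.cwP_additive_right[of "rev ys" 1 xs zs]]
    by (simp add: cwN_eq_gswap_cwP)
qed

lemma balanced_gm_GP_left:
  "equiv_gen (gm (GP (xs @ rM x a # x' # zs)) v) (gm (GP (xs @ x # lM a x' # zs)) v)"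
proof (cases v)
  case (G0 d)
  then show ?thesis using cwP_balanced_left[of "rev zs" x' x a "rev xs" d "[]"] by simp
next
  case (GP ws)
  then show ?thesis using rel_GP_balanced[of xs x a x' "zs @ ws"] by simp
next
  case (GN ys)
  then show ?thesis using cwP_balanced_left[of "rev zs" x' x a "rev xs" 1 ys] by simp
qed

lemma balanced_gm_GP_right:
  "equiv_gen (gm v (GP (xs @ rM x a # x' # zs))) (gm v (GP (xs @ x # lM a x' # zs)))"
proof (cases v)
  case (G0 d)
  then show ?thesis
    using equiv_gen_gswap[OF swapped.cwP_balanced_right[of "[]" d xs x a x' zs]]
    by (simp add: cwN_eq_gswap_cwP)
next
  case (GP ws)
  then show ?thesis using rel_GP_balanced[of "ws @ xs" x a x' zs] by simp
next
  case (GN ys)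
  then show ?thesis
    using equiv_gen_gswap[OF swapped.cwP_balanced_right[of "rev ys" 1 xs x a x' zs]]
    by (simp add: cwN_eq_gswap_cwP)
qed

lemma gm_cwN_GP: "xs' \<noteq> [] \<Longrightarrow> gm (cN rys a xs) (GP xs') = cN rys a (xs @ xs')"
  by (simp add: cwN_eq_gswap_cwP gm_eq_gswap swapped.gm_cwP_GN)

lemma gm_GN_cwN: "ys \<noteq> [] \<Longrightarrow> gm (GN ys) (cN rys a xs) = cN (rys @ rev ys) a xs"
  by (simp add: cwN_eq_gswap_cwP gm_eq_gswap swapped.gm_GP_cwP)

lemma gm_G0_cwN_Nil: "gm (G0 b) (cN [] a xs) = cN [] (b * a) xs"
  by (simp add: cwN_eq_gswap_cwP gm_eq_gswap swapped.gm_G0_cwP_Nil)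

lemma gm_G0_cwN_snoc: "gm (G0 b) (cN (rys @ [y]) a xs) = cN (rys @ [lN b y]) a xs"
  by (simp add: cwN_eq_gswap_cwP gm_eq_gswap swapped.gm_G0_cwP_snoc)

lemma gm_cwN_Nil_G0: "gm (cN rys a []) (G0 b) = cN rys (a * b) []"
  by (simp add: cwN_eq_gswap_cwP gm_eq_gswap swapped.gm_cwP_Nil_G0)

lemma gm_cwN_snoc_G0: "gm (cN rys a (xs @ [x])) (G0 b) = cN rys a (xs @ [rM x b])"
  by (simp add: cwN_eq_gswap_cwP gm_eq_gswap swapped.gm_cwP_snoc_G0)

text \<open>Exactly the triples in which contractions can be performed at both junctions.\<close>

fun hard_triple :: "('a, 'm, 'n) gen \<Rightarrow> ('a, 'm, 'n) gen \<Rightarrow> ('a, 'm, 'n) gen \<Rightarrow> bool" where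
  "hard_triple (GP _) (G0 _) (GP _) = True"
| "hard_triple (GN _) (G0 _) (GN _) = True"
| "hard_triple (GP _) (GN _) (GP _) = True"
| "hard_triple (GN _) (GP _) (GN _) = True"
| "hard_triple _ _ _ = False"

text \<open>Exposes at the same time the first element of a list, which is consumed by cwN, and its
  last element, which is consumed by cwP on the reversed list.\<close>

lemma neq_Nil_ends: "xs \<noteq> [] \<longleftrightarrow> (\<exists>x. xs = [x]) \<or> (\<exists>x ys y. xs = x # ys @ [y])"
  by (cases xs rule: rev_cases; cases "butlast xs") (auto simp: Cons_eq_append_conv)

lemma gm_assoc_easy:
  assumes "valid_gen u" "valid_gen v" "valid_gen w" "\<not> hard_triple u v w"
  shows "gm (gm u v) w = gm u (gm v w)"
  using assms
  by (cases u; cases v; cases w)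
    (auto simp: neq_Nil_ends mult.assoc rM_one rN_one lM_rM lN_rN beta_lM beta'_lN beta_rN beta'_rM
      gm_cwP_GN gm_GP_cwP gm_G0_cwP_Nil gm_G0_cwP_snoc gm_cwP_Nil_G0 gm_cwP_snoc_G0
      gm_cwN_GP gm_GN_cwN gm_G0_cwN_Nil gm_G0_cwN_snoc gm_cwN_Nil_G0 gm_cwN_snoc_G0)

lemma GP_central_scalar_shift:
  assumes "\<And>z. lM p z = rM z p"
  shows "equiv_gen (GP (pre @ lM p x # xs)) (GP (pre @ butlast (x # xs) @ [rM (last (x # xs)) p]))"
proof (induction xs arbitrary: pre x)
  case Nil
  then show ?case by (simp add: assms equiv_gen_refl)
next
  case (Cons x2 xs)
  have "equiv_gen (GP (pre @ lM p x # x2 # xs)) (GP ((pre @ [x]) @ lM p x2 # xs))"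
    using rel_GP_balanced[of pre x p x2 xs] by (simp add: assms)
  also have "equiv_gen \<dots> (GP ((pre @ [x]) @ butlast (x2 # xs) @ [rM (last (x2 # xs)) p]))"
    by (rule Cons.IH)
  finally show ?case by simp
qed

lemma gm_G0_GP_central:
  assumes "\<And>z. lM p z = rM z p" "xs \<noteq> []"
  shows "equiv_gen (gm (G0 p) (GP xs)) (gm (GP xs) (G0 p))"
proof -
  obtain x xs' where "xs = x # xs'" using assms(2) by (cases xs) auto
  then show ?thesis
    using GP_central_scalar_shift[of p "[]" x xs', OF assms(1)] cwP_rev_Nil[of xs p] by simp
qed

lemma assoc_GP_G0_GP:
  assumes "xs \<noteq> []" "xs' \<noteq> []"
  shows "equiv_gen (gm (gm (GP xs) (G0 a)) (GP xs')) (gm (GP xs) (gm (G0 a) (GP xs')))"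
proof -
  obtain xs0 x where "xs = xs0 @ [x]" using assms(1) by (cases xs rule: rev_cases) auto
  moreover obtain x' xs'' where "xs' = x' # xs''" using assms(2) by (cases xs') auto
  ultimately show ?thesis using rel_GP_balanced[of xs0 x a x' xs''] by simp
qed

lemma gm_GP_GN_single_not_GN: "xs \<noteq> [] \<Longrightarrow> gm (GP xs) (GN [y]) \<noteq> GN zs"
  using valid_gdeg_gm[of "GP xs" "GN [y]"] by (cases zs) auto

text \<open>The bonding condition enters here.\<close>

lemma assoc_GP_GN_GP_singletons:
  assumes "xs \<noteq> []"
  shows "equiv_gen (gm (gm (GP xs) (GN [y])) (GP [x'])) (gm (GP xs) (gm (GN [y]) (GP [x'])))"
proof -
  obtain xs0 x where xs: "xs = xs0 @ [x]" using assms by (cases xs rule: rev_cases) auto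
  show ?thesis
  proof (cases xs0 rule: rev_cases)
    case Nil
    then show ?thesis using xs by (simp add: rM_one rN_one bond_M equiv_gen_refl)
  next
    case (snoc xs1 z)
    then show ?thesis
      using xs rel_GP_balanced[of xs1 z "\<beta> x y" x' "[]"] by (simp add: rM_one rN_one bond_M)
  qed
qed

end

context bonded_pair
begin

lemma additive_gm_GN_left: "additive_gen (\<lambda>y. gm (GN (ys @ y # zs)) v)"
  using additive_gen_gswap[OF swapped.additive_gm_GP_left[of ys zs "gswap v"]]
  by (simp add: gm_eq_gswap)

lemma additive_gm_GN_right: "additive_gen (\<lambda>y. gm v (GN (ys @ y # zs)))"
  using additive_gen_gswap[OF swapped.additive_gm_GP_right[of "gswap v" ys zs]]
  by (simp add: gm_eq_gswap)

lemma balanced_gm_GN_left: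
  "equiv_gen (gm (GN (ys @ rN y a # y' # zs)) v) (gm (GN (ys @ y # lN a y' # zs)) v)"
  using equiv_gen_gswap[OF swapped.balanced_gm_GP_left[of ys y a y' zs "gswap v"]]
  by (simp add: gm_eq_gswap)

lemma balanced_gm_GN_right:
  "equiv_gen (gm v (GN (ys @ rN y a # y' # zs))) (gm v (GN (ys @ y # lN a y' # zs)))"
  using equiv_gen_gswap[OF swapped.balanced_gm_GP_right[of "gswap v" ys y a y' zs]]
  by (simp add: gm_eq_gswap)

lemma tensor_rels_finsupp: "r \<in> tensor_rels lM rM lN rN \<Longrightarrow> finsupp r"
  unfolding tensor_rels_def fdiff_eq_minus by (auto intro!: finsupp_diff finsupp_single)

lemma tensor_rels_mult_single:
  assumes "r \<in> tensor_rels lM rM lN rN"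
  shows "fmult gm r (single v) \<in> Z \<and> fmult gm (single v) r \<in> Z"
  using assms additive_gm_G0_left additive_gm_G0_right additive_gm_GP_left additive_gm_GP_right
    additive_gm_GN_left additive_gm_GN_right balanced_gm_GP_left balanced_gm_GP_right
    balanced_gm_GN_left balanced_gm_GN_right
  unfolding tensor_rels_def fdiff_eq_minus additive_gen_def equiv_gen_def
  by (auto simp: fmult_diff_left fmult_diff_right finsupp_diff finsupp_single fmult_single)

lemma equiv_gen_gm_cong:
  assumes "equiv_gen u u'"
  shows "equiv_gen (gm u w) (gm u' w) \<and> equiv_gen (gm w u) (gm w u')"
  using fmult_zspan_ideal[of "tensor_rels lM rM lN rN" "\<lambda>_. True" gm "single u - single u'" "single w"]
    tensor_rels_finsupp tensor_rels_mult_single assms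
  by (auto simp: equiv_gen_def finsupp_on_def finsupp_single fmult_diff_left fmult_diff_right
      fmult_single)

lemma assoc_GP_GN_single_GP:
  assumes "xs \<noteq> []" "xs' \<noteq> []"
  shows "equiv_gen (gm (gm (GP xs) (GN [y])) (GP xs')) (gm (GP xs) (gm (GN [y]) (GP xs')))"
  using assms(2)
proof (induction xs' rule: list_nonempty_induct)
  case (single x')
  then show ?case using assoc_GP_GN_GP_singletons[OF assms(1)] by simp
next
  case (cons x' xs'')
  define t where "t = gm (GP xs) (GN [y])"
  define c where "c = \<beta>' (rN y 1) x'"
  have "valid_gen t" "\<forall>zs. t \<noteq> GN zs"
    unfolding t_def using valid_gdeg_gm[of "GP xs" "GN [y]"] gm_GP_GN_single_not_GN assms(1)
    by auto
  then have "equiv_gen (gm t (GP (x' # xs''))) (gm (gm t (GP [x'])) (GP xs''))"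
    using gm_assoc_easy[of t "GP [x']" "GP xs''"] cons.hyps by (cases t) (auto simp: equiv_gen_refl)
  also have "equiv_gen \<dots> (gm (gm (GP xs) (G0 c)) (GP xs''))"
    using equiv_gen_gm_cong[OF assoc_GP_GN_GP_singletons[OF assms(1), of y x']]
    by (simp add: t_def c_def)
  also have "equiv_gen \<dots> (gm (GP xs) (gm (G0 c) (GP xs'')))"
    by (rule assoc_GP_G0_GP[OF assms(1) cons.hyps])
  also have "equiv_gen \<dots> (gm (GP xs) (gm (GN [y]) (GP (x' # xs''))))"
    using cons.hyps by (cases xs'') (simp_all add: c_def equiv_gen_refl)
  finally show ?case by (simp only: t_def)
qed

lemma assoc_GP_GN_GP:
  assumes "ys \<noteq> []"
  shows "xs \<noteq> [] \<Longrightarrow> xs' \<noteq> [] \<Longrightarrow>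
    equiv_gen (gm (gm (GP xs) (GN ys)) (GP xs')) (gm (GP xs) (gm (GN ys) (GP xs')))"
  using assms
proof (induction ys arbitrary: xs rule: list_nonempty_induct)
  case (single y)
  then show ?case by (rule assoc_GP_GN_single_GP)
next
  case (cons y ys')
  define t where "t = gm (GP xs) (GN [y])"
  define s where "s = gm (GN ys') (GP xs')"
  have t: "valid_gen t" "\<forall>zs. t \<noteq> GN zs"
    unfolding t_def using valid_gdeg_gm[of "GP xs" "GN [y]"] gm_GP_GN_single_not_GN cons.prems
    by auto
  have s: "valid_gen s"
    unfolding s_def using valid_gdeg_gm[of "GN ys'" "GP xs'"] cons.prems cons.hyps by simp
  have "equiv_gen (gm (gm (GP xs) (GN (y # ys'))) (GP xs')) (gm (gm t (GN ys')) (GP xs'))"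
    unfolding t_def using gm_assoc_easy[of "GP xs" "GN [y]" "GN ys'"] cons
    by (simp add: equiv_gen_refl)
  also have "equiv_gen \<dots> (gm t s)"
  proof (cases t)
    case (G0 c)
    then show ?thesis
      unfolding s_def using gm_assoc_easy[of t "GN ys'" "GP xs'"] cons by (simp add: equiv_gen_refl)
  next
    case (GP zs)
    then show ?thesis unfolding s_def using cons t by simp
  qed (use t in simp)
  also have "equiv_gen \<dots> (gm (GP xs) (gm (GN [y]) s))"
  proof (cases s)
    case (GP zs)
    then show ?thesis unfolding t_def using assoc_GP_GN_single_GP cons.prems s by simp
  qed (use gm_assoc_easy[of "GP xs" "GN [y]" s] cons.prems s in \<open>simp_all add: t_def equiv_gen_refl\<close>)
  also have "equiv_gen \<dots> (gm (GP xs) (gm (GN (y # ys')) (GP xs')))"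
    unfolding s_def using gm_assoc_easy[of "GN [y]" "GN ys'" "GP xs'"] cons
    by (simp add: equiv_gen_refl)
  finally show ?case .
qed

end

context bonded_pair
begin

lemma gm_G0_central:
  assumes "\<And>z. lM p z = rM z p" "\<And>z. lN p z = rN z p" "\<And>a. p * a = a * p" "valid_gen v"
  shows "equiv_gen (gm (G0 p) v) (gm v (G0 p))"
proof (cases v)
  case (G0 a)
  then show ?thesis by (simp add: assms(3) equiv_gen_refl)
next
  case (GP xs)
  then show ?thesis using gm_G0_GP_central[OF assms(1)] assms(4) by simp
next
  case (GN ys)
  with assms(4) have "ys \<noteq> []" by simp
  with GN show ?thesis
    using equiv_gen_gswap[OF swapped.gm_G0_GP_central[OF assms(2)]]
    by (simp only: swapped.gswap_gm gswap.simps)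
qed

lemma assoc_GN_G0_GN:
  "ys \<noteq> [] \<Longrightarrow> ys' \<noteq> [] \<Longrightarrow>
    equiv_gen (gm (gm (GN ys) (G0 a)) (GN ys')) (gm (GN ys) (gm (G0 a) (GN ys')))"
  using equiv_gen_gswap[OF swapped.assoc_GP_G0_GP] by (simp only: swapped.gswap_gm gswap.simps)

lemma assoc_GN_GP_GN:
  "xs \<noteq> [] \<Longrightarrow> ys \<noteq> [] \<Longrightarrow> ys' \<noteq> [] \<Longrightarrow>
    equiv_gen (gm (gm (GN ys) (GP xs)) (GN ys')) (gm (GN ys) (gm (GP xs) (GN ys')))"
  using equiv_gen_gswap[OF swapped.assoc_GP_GN_GP] by (simp only: swapped.gswap_gm gswap.simps)

lemma gm_assoc:
  assumes "valid_gen u" "valid_gen v" "valid_gen w"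
  shows "equiv_gen (gm (gm u v) w) (gm u (gm v w))"
proof (cases "hard_triple u v w")
  case False
  then show ?thesis using gm_assoc_easy assms equiv_gen_refl by metis
next
  case True
  then show ?thesis
    using assms
    by (cases u; cases v; cases w)
      (auto simp del: gmult.simps
        intro: assoc_GP_G0_GP assoc_GP_GN_GP assoc_GN_G0_GN assoc_GN_GP_GN)
qed

lemma free_el_fmult: "free_el f \<Longrightarrow> free_el g \<Longrightarrow> free_el (fmult gm f g)"
  unfolding free_el_iff_finsupp_on by (rule finsupp_on_fmult) (simp_all add: valid_gdeg_gm)

lemma fmult_zspan_tensor_rels_ideal:
  "f \<in> Z \<Longrightarrow> free_el g \<Longrightarrow> fmult gm f g \<in> Z \<and> fmult gm g f \<in> Z"
  unfolding free_el_iff_finsupp_on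
  by (rule fmult_zspan_ideal[OF tensor_rels_finsupp tensor_rels_mult_single])

lemma fmult_assoc_mod_tensor_rels:
  "free_el f \<Longrightarrow> free_el g \<Longrightarrow> free_el h \<Longrightarrow>
    fmult gm (fmult gm f g) h - fmult gm f (fmult gm g h) \<in> Z"
  unfolding free_el_iff_finsupp_on
  by (rule fmult_assoc_mod_zspan) (use gm_assoc in \<open>simp_all add: equiv_gen_def\<close>)

lemma fmult_G0_one_neutral:
  "free_el f \<Longrightarrow> fmult gm (single (G0 1)) f = f \<and> fmult gm f (single (G0 1)) = f"
  using fmult_single_left_neutral[of valid_gen gm "G0 1" f]
    fmult_single_right_neutral[of valid_gen gm "G0 1" f]
  by (simp add: free_el_iff_finsupp_on gm_G0_one_left gm_G0_one_right)

lemma fmult_G0_central_mod_tensor_rels: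
  assumes "\<And>z. lM p z = rM z p" "\<And>z. lN p z = rN z p" "\<And>a. p * a = a * p" "free_el f"
  shows "fmult gm (single (G0 p)) f - fmult gm f (single (G0 p)) \<in> Z"
  using assms(4) gm_G0_central[OF assms(1-3)]
  unfolding free_el_iff_finsupp_on
  by (intro fmult_single_commute_mod_zspan) (simp_all add: equiv_gen_def)

end

lemma bonded_pair_if_bonded:
  assumes "bimodule \<phi> lM rM" "bimodule \<phi> lN rN" "bonded lM rM lN rN \<beta> \<beta>'"
  shows "bonded_pair lM rM lN rN \<beta> \<beta>'"
  using assms unfolding bimodule_def bonded_def bimod_pairing_def
  by unfold_locales auto

theorem lemma2:
  fixes \<phi> :: "'k::field \<Rightarrow> 'a::ring_1"
    and lM :: "'a \<Rightarrow> 'm::ab_group_add \<Rightarrow> 'm" and rM :: "'m \<Rightarrow> 'a \<Rightarrow> 'm"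
    and lN :: "'a \<Rightarrow> 'n::ab_group_add \<Rightarrow> 'n" and rN :: "'n \<Rightarrow> 'a \<Rightarrow> 'n"
    and \<beta> :: "'m \<Rightarrow> 'n \<Rightarrow> 'a" and \<beta>' :: "'n \<Rightarrow> 'm \<Rightarrow> 'a"
  assumes "fin_dim_algebra \<phi>"
    and "bimodule \<phi> lM rM"
    and "bimodule \<phi> lN rN"
    and "bonded lM rM lN rN \<beta> \<beta>'"
  shows
    \<comment> \<open>the product of generators is homogeneous: degree i1 times degree i2 lands in degree i1+i2\<close>
    "(\<forall>u v. valid_gen u \<longrightarrow> valid_gen v \<longrightarrow>
        valid_gen (gmult lM rM lN rN \<beta> \<beta>' u v) \<and>
        gdeg (gmult lM rM lN rN \<beta> \<beta>' u v) = gdeg u + gdeg v)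
   \<and> (\<forall>f g. free_el f \<longrightarrow> free_el g \<longrightarrow>
        free_el (fmult (gmult lM rM lN rN \<beta> \<beta>') f g))
   \<comment> \<open>biadditivity\<close>
   \<and> (\<forall>f g h. free_el f \<longrightarrow> free_el g \<longrightarrow> free_el h \<longrightarrow>
        fmult (gmult lM rM lN rN \<beta> \<beta>') (fadd f g) h
          = fadd (fmult (gmult lM rM lN rN \<beta> \<beta>') f h) (fmult (gmult lM rM lN rN \<beta> \<beta>') g h)
      \<and> fmult (gmult lM rM lN rN \<beta> \<beta>') h (fadd f g)
          = fadd (fmult (gmult lM rM lN rN \<beta> \<beta>') h f) (fmult (gmult lM rM lN rN \<beta> \<beta>') h g))
   \<comment> \<open>the product descends to the quotient (relations form a two-sided ideal)\<close>
   \<and> (\<forall>f g. f \<in> zspan (tensor_rels lM rM lN rN) \<longrightarrow> free_el g \<longrightarrow>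
        fmult (gmult lM rM lN rN \<beta> \<beta>') f g \<in> zspan (tensor_rels lM rM lN rN) \<and>
        fmult (gmult lM rM lN rN \<beta> \<beta>') g f \<in> zspan (tensor_rels lM rM lN rN))
   \<comment> \<open>associativity in the quotient\<close>
   \<and> (\<forall>f g h. free_el f \<longrightarrow> free_el g \<longrightarrow> free_el h \<longrightarrow>
        fdiff (fmult (gmult lM rM lN rN \<beta> \<beta>') (fmult (gmult lM rM lN rN \<beta> \<beta>') f g) h)
              (fmult (gmult lM rM lN rN \<beta> \<beta>') f (fmult (gmult lM rM lN rN \<beta> \<beta>') g h))
          \<in> zspan (tensor_rels lM rM lN rN))
   \<comment> \<open>1 of A (in degree 0) is a two-sided unit in the quotient\<close>
   \<and> (\<forall>f. free_el f \<longrightarrow>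
        fdiff (fmult (gmult lM rM lN rN \<beta> \<beta>') (single (G0 1)) f) f \<in> zspan (tensor_rels lM rM lN rN) \<and>
        fdiff (fmult (gmult lM rM lN rN \<beta> \<beta>') f (single (G0 1))) f \<in> zspan (tensor_rels lM rM lN rN))
   \<comment> \<open>the scalars k (via A in degree 0) are central, so the quotient is a k-algebra\<close>
   \<and> (\<forall>c f. free_el f \<longrightarrow>
        fdiff (fmult (gmult lM rM lN rN \<beta> \<beta>') (single (G0 (\<phi> c))) f)
              (fmult (gmult lM rM lN rN \<beta> \<beta>') f (single (G0 (\<phi> c))))
          \<in> zspan (tensor_rels lM rM lN rN))"
proof -
  interpret bonded_pair lM rM lN rN \<beta> \<beta>'
    using assms(2-4) by (rule bonded_pair_if_bonded)
  have scalar_central: "\<And>z. lM (\<phi> c) z = rM z (\<phi> c)" "\<And>z. lN (\<phi> c) z = rN z (\<phi> c)"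
    "\<And>a. \<phi> c * a = a * \<phi> c" for c
    using assms(1-3) by (simp_all add: bimodule_def fin_dim_algebra_def k_algebra_def)
  show ?thesis
    unfolding fadd_eq_plus fdiff_eq_minus
    by (intro conjI allI impI)
      (simp_all add: valid_gdeg_gm free_el_fmult free_el_finsupp fmult_add_left fmult_add_right
        fmult_zspan_tensor_rels_ideal fmult_assoc_mod_tensor_rels fmult_G0_one_neutral zspan_0
        fmult_G0_central_mod_tensor_rels[OF scalar_central])
qed

end
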